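(* Let $\mathcal{X}$ be a covariate space with distribution $P_X$, $\mathcal{F}$ an eligible set of prediction rules with evaluation distribution $\lambda_{\mathcal{F}}$, $\mathcal{F}_\Theta=\{f_\theta:\theta\in\Theta\}$ a model class and $f_{\mathrm{base}}$ a baseline rule. Suppose that for $\lambda_{\mathcal{F}}$-a.e. $f$, $d(f_\theta,f)=\mathbb{E}_{P_X}[g(X,\theta;f)]$ and $d(f_{\mathrm{base}},f)=\mathbb{E}_{P_X}[g_{\mathrm{base}}(X;f)]$ for measurable $g,g_{\mathrm{base}}$, with $\sup_{\theta,f}\mathbb{E}[g(X,\theta;f)^{2+\epsilon}]<\infty$ and $\sup_f\mathbb{E}[g_{\mathrm{base}}(X;f)^{2+\epsilon}]<\infty$ for some $\epsilon>0$. Let $d(\mathcal{F}_\Theta,f):=\inf_\theta d(f_\theta,f)$, and given an i.i.d. sample $X_1,\dots,X_n\sim P_X$ define $d_n(f_\theta,f):=\frac1n\sum_i g(X_i,\theta;f)$, $d_n(\mathcal{F}_\Theta,f):=\inf_\theta d_n(f_\theta,f)$, $d_n(f_{\mathrm{base}},f):=\frac1n\sum_i g_{\mathrm{base}}(X_i;f)$. Assume (asymptotic linearity) that for $\lambda_{\mathcal{F}}$-a.e. $f$ there is a measurable $\phi_1(\cdot;f)$ with $\mathbb{E}[\phi_1(X;f)]=0$, $\mathbb{E}[\phi_1(X;f)^2]<\infty$, and $d_n(\mathcal{F}_\Theta,f)-d(\mathcal{F}_\Theta,f)=\frac1n\sum_{i=1}^n\phi_1(X_i;f)+o_p(n^{-1/2})$.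 Fix $M\ge1$ and draws $f_1,\dots,f_M$ i.i.d. from $\lambda_{\mathcal{F}}$, independent of the sample. Define $\mu_{1,M}:=\frac1M\sum_m d(\mathcal{F}_\Theta,f_m)$, $\mu_{0,M}:=\frac1M\sum_m d(f_{\mathrm{base}},f_m)$ (assumed $>0$), $r_M:=\mu_{1,M}/\mu_{0,M}$, and $\widehat r_{n,M}:=\frac{\frac1M\sum_m d_n(\mathcal{F}_\Theta,f_m)}{\frac1M\sum_m d_n(f_{\mathrm{base}},f_m)}$. Let $\phi_0(x;f):=g_{\mathrm{base}}(x;f)-d(f_{\mathrm{base}},f)$, $\Phi^{(k)}(x):=\frac1M\sum_m\phi_k(x;f_m)$ for $k=0,1$, and $\psi_M(x):=\frac{1}{\mu_{0,M}}\big(\Phi^{(1)}(x)-r_M\Phi^{(0)}(x)\big)$. Then, conditional on $(f_1,\dots,f_M)$, as $n\to\infty$, \[ \sqrt{n}\big(\widehat r_{n,M}-r_M\big)\xrightarrow{d}N(0,\sigma_M^2),\qquad \sigma_M^2:=\mathrm{Var}\big(\psi_M(X_1)\big). \]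
   Context: $d$ is a discrepancy between prediction rules; restrictiveness is the ratio of expected model discrepancy to expected baseline discrepancy under $\lambda_{\mathcal{F}}$, and $\widehat r_{n,M}$ is its Monte Carlo/sample-analog estimator. *)

theory Defs
  imports "HOL-Probability.Probability"
begin

text \<open>Prediction rules live in type 'f; d is a discrepancy between rules;
 ftheta parametrises the model class F_Theta (parameters of type 't).\<close>

definition dF :: "('f \<Rightarrow> 'f \<Rightarrow> real) \<Rightarrow> ('t \<Rightarrow> 'f) \<Rightarrow> 'f \<Rightarrow> real" where
  "dF d ftheta f = (INF \<theta>. d (ftheta \<theta>) f)"

definition dn :: "('x \<Rightarrow> 't \<Rightarrow> 'f \<Rightarrow> real) \<Rightarrow> (nat \<Rightarrow> 'w \<Rightarrow> 'x) \<Rightarrow> nat \<Rightarrow> 't \<Rightarrow> 'f \<Rightarrow> 'w \<Rightarrow> real" where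
  "dn g X n \<theta> f \<omega> = (\<Sum>i<n. g (X i \<omega>) \<theta> f) / real n"

definition dnF :: "('x \<Rightarrow> 't \<Rightarrow> 'f \<Rightarrow> real) \<Rightarrow> (nat \<Rightarrow> 'w \<Rightarrow> 'x) \<Rightarrow> nat \<Rightarrow> 'f \<Rightarrow> 'w \<Rightarrow> real" where
  "dnF g X n f \<omega> = (INF \<theta>. dn g X n \<theta> f \<omega>)"

definition dn_base :: "('x \<Rightarrow> 'f \<Rightarrow> real) \<Rightarrow> (nat \<Rightarrow> 'w \<Rightarrow> 'x) \<Rightarrow> nat \<Rightarrow> 'f \<Rightarrow> 'w \<Rightarrow> real" where
  "dn_base gbase X n f \<omega> = (\<Sum>i<n. gbase (X i \<omega>) f) / real n"

definition mu1 :: "('f \<Rightarrow> 'f \<Rightarrow> real) \<Rightarrow> ('t \<Rightarrow> 'f) \<Rightarrow> nat \<Rightarrow> (nat \<Rightarrow> 'f) \<Rightarrow> real" where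
  "mu1 d ftheta M fs = (\<Sum>m<M. dF d ftheta (fs m)) / real M"

definition mu0 :: "('f \<Rightarrow> 'f \<Rightarrow> real) \<Rightarrow> 'f \<Rightarrow> nat \<Rightarrow> (nat \<Rightarrow> 'f) \<Rightarrow> real" where
  "mu0 d fbase M fs = (\<Sum>m<M. d fbase (fs m)) / real M"

definition rM :: "('f \<Rightarrow> 'f \<Rightarrow> real) \<Rightarrow> ('t \<Rightarrow> 'f) \<Rightarrow> 'f \<Rightarrow> nat \<Rightarrow> (nat \<Rightarrow> 'f) \<Rightarrow> real" where
  "rM d ftheta fbase M fs = mu1 d ftheta M fs / mu0 d fbase M fs"

definition rhat :: "('x \<Rightarrow> 't \<Rightarrow> 'f \<Rightarrow> real) \<Rightarrow> ('x \<Rightarrow> 'f \<Rightarrow> real) \<Rightarrow> (nat \<Rightarrow> 'w \<Rightarrow> 'x)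
    \<Rightarrow> nat \<Rightarrow> (nat \<Rightarrow> 'f) \<Rightarrow> nat \<Rightarrow> 'w \<Rightarrow> real" where
  "rhat g gbase X M fs n \<omega> =
     ((\<Sum>m<M. dnF g X n (fs m) \<omega>) / real M) / ((\<Sum>m<M. dn_base gbase X n (fs m) \<omega>) / real M)"

definition phi0 :: "('x \<Rightarrow> 'f \<Rightarrow> real) \<Rightarrow> ('f \<Rightarrow> 'f \<Rightarrow> real) \<Rightarrow> 'f \<Rightarrow> 'x \<Rightarrow> 'f \<Rightarrow> real" where
  "phi0 gbase d fbase x f = gbase x f - d fbase f"

definition Phi :: "('x \<Rightarrow> 'f \<Rightarrow> real) \<Rightarrow> nat \<Rightarrow> (nat \<Rightarrow> 'f) \<Rightarrow> 'x \<Rightarrow> real" where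
  "Phi phi M fs x = (\<Sum>m<M. phi x (fs m)) / real M"

definition psiM :: "('x \<Rightarrow> 'f \<Rightarrow> real) \<Rightarrow> ('x \<Rightarrow> 'f \<Rightarrow> real) \<Rightarrow> ('f \<Rightarrow> 'f \<Rightarrow> real) \<Rightarrow> ('t \<Rightarrow> 'f) \<Rightarrow> 'f
    \<Rightarrow> nat \<Rightarrow> (nat \<Rightarrow> 'f) \<Rightarrow> 'x \<Rightarrow> real" where
  "psiM phi1 gbase d ftheta fbase M fs x =
     (Phi phi1 M fs x - rM d ftheta fbase M fs * Phi (phi0 gbase d fbase) M fs x) / mu0 d fbase M fs"

definition var_of :: "'x measure \<Rightarrow> ('x \<Rightarrow> real) \<Rightarrow> real" where
  "var_of P \<psi> = (\<integral>x. (\<psi> x - (\<integral>y. \<psi> y \<partial>P))\<^sup>2 \<partial>P)"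

definition conv_in_prob :: "'w measure \<Rightarrow> (nat \<Rightarrow> 'w \<Rightarrow> real) \<Rightarrow> real \<Rightarrow> bool" where
  "conv_in_prob \<Omega> Y c \<longleftrightarrow>
     (\<forall>e>0. (\<lambda>n. measure \<Omega> {\<omega> \<in> space \<Omega>. \<bar>Y n \<omega> - c\<bar> > e}) \<longlonglongrightarrow> 0)"

text \<open>N(0, s2) as the law of sqrt s2 * Z with Z standard normal (covers s2 = 0).\<close>
definition normal_law :: "real \<Rightarrow> real measure" where
  "normal_law s2 = distr (density lborel std_normal_density) borel (\<lambda>z. sqrt s2 * z)"

definition conv_in_distr :: "'w measure \<Rightarrow> (nat \<Rightarrow> 'w \<Rightarrow> real) \<Rightarrow> real measure \<Rightarrow> bool" where
  "conv_in_distr \<Omega> Y L \<longleftrightarrow> weak_conv_m (\<lambda>n. distr \<Omega> borel (Y n)) L"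

end

theory Submission
  imports Defs "HOL-Real_Asymp.Real_Asymp"
begin

(* For fixed draws f_1, ..., f_M write S_n = sum_i psiM(X_i) and W_n = sum_i Phi0(X_i), sums of
   i.i.d. centred square-integrable variables.  The denominator of the ratio estimator is
   D_n = mu0 + W_n / n, and by asymptotic linearity its numerator is
   mu1 + (mu0 S_n + r W_n) / n + rho_n / sqrt n with rho_n -> 0 in probability, because
   Phi1 = mu0 psiM + r Phi0.  Pure algebra then gives
     sqrt n (rhat_n - r) - S_n / sqrt n = (rho_n - (S_n / n^(3/4)) (W_n / n^(3/4))) / D_n,
   and by Chebyshev's inequality S_n / n^(3/4), W_n / n^(3/4) and W_n / n tend to 0 in
   probability, so the right-hand side does as well (D_n -> mu0 > 0).  The central limit theorem
   for S_n / sqrt n and Slutsky's lemma finish the proof. *)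

section \<open>Square-integrable functions\<close>

lemma square_integrable_add:
  fixes f g :: "'a \<Rightarrow> real"
  assumes [measurable]: "f \<in> borel_measurable M" "g \<in> borel_measurable M"
    and "integrable M (\<lambda>x. (f x)\<^sup>2)" "integrable M (\<lambda>x. (g x)\<^sup>2)"
  shows "integrable M (\<lambda>x. (f x + g x)\<^sup>2)"
proof (rule Bochner_Integration.integrable_bound)
  show "integrable M (\<lambda>x. 2 * (f x)\<^sup>2 + 2 * (g x)\<^sup>2)"
    using assms by auto
  have "(f x + g x)\<^sup>2 \<le> 2 * (f x)\<^sup>2 + 2 * (g x)\<^sup>2" for x
    using zero_le_power2[of "f x - g x"] by (simp add: power2_eq_square algebra_simps)
  then show "AE x in M. norm ((f x + g x)\<^sup>2) \<le> norm (2 * (f x)\<^sup>2 + 2 * (g x)\<^sup>2)"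
    by simp
qed measurable

lemma square_integrable_cmult:
  fixes f :: "'a \<Rightarrow> real"
  assumes "integrable M (\<lambda>x. (f x)\<^sup>2)"
  shows "integrable M (\<lambda>x. (c * f x)\<^sup>2)"
  using integrable_mult_right[OF assms, of "c\<^sup>2"] by (simp add: power_mult_distrib)

lemma square_integrable_sum:
  fixes f :: "'i \<Rightarrow> 'a \<Rightarrow> real"
  assumes "finite I" "\<And>i. i \<in> I \<Longrightarrow> f i \<in> borel_measurable M"
    "\<And>i. i \<in> I \<Longrightarrow> integrable M (\<lambda>x. (f i x)\<^sup>2)"
  shows "integrable M (\<lambda>x. (\<Sum>i\<in>I. f i x)\<^sup>2)"
  using assms
proof (induction I rule: finite_induct)
  case (insert j I)
  then show ?case
    by (simp add: sum.insert square_integrable_add borel_measurable_sum)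
qed simp

lemma (in finite_measure) square_integrable_if_integrable_powr:
  fixes f :: "'a \<Rightarrow> real"
  assumes [measurable]: "f \<in> borel_measurable M"
    and "integrable M (\<lambda>x. \<bar>f x\<bar> powr p)" and "p \<ge> 2"
  shows "integrable M (\<lambda>x. (f x)\<^sup>2)"
proof (rule Bochner_Integration.integrable_bound)
  show "integrable M (\<lambda>x. 1 + \<bar>f x\<bar> powr p)"
    using assms by auto
  have "(f x)\<^sup>2 \<le> 1 + \<bar>f x\<bar> powr p" for x
  proof (cases "\<bar>f x\<bar> \<le> 1")
    case True
    then have "(f x)\<^sup>2 \<le> 1"
      by (simp add: abs_square_le_1)
    then show ?thesis
      using powr_ge_zero[of "\<bar>f x\<bar>" p] by linarith
  next
    case False
    then have "(f x)\<^sup>2 = \<bar>f x\<bar> powr 2"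
      by (simp add: powr_numeral)
    also have "\<dots> \<le> \<bar>f x\<bar> powr p"
      using False \<open>p \<ge> 2\<close> by (intro powr_mono) auto
    finally show ?thesis by simp
  qed
  then show "AE x in M. norm ((f x)\<^sup>2) \<le> norm (1 + \<bar>f x\<bar> powr p)"
    by simp
qed measurable

section \<open>Convergence in probability and in distribution\<close>

lemma real_distribution_normal_law: "real_distribution (normal_law s2)"
  unfolding normal_law_def
  by (intro prob_space.real_distribution_distr) (simp_all add: prob_space_normal_density)

lemma normal_law_zero: "normal_law 0 = return borel 0"
proof -
  have "normal_law 0 = distr std_normal_distribution borel (\<lambda>_. 0)"
    unfolding normal_law_def by (rule distr_cong) auto
  then show ?thesis
    by (simp add: prob_space.distr_const prob_space_normal_density)
qed

context prob_space
begin

lemma conv_in_prob_zero_if_controlled: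
  assumes [measurable]: "\<And>n. X n \<in> borel_measurable M" "\<And>n. Y n \<in> borel_measurable M"
    and X: "conv_in_prob M X 0" and Y: "conv_in_prob M Y 0"
    and control: "\<And>e. e > 0 \<Longrightarrow> \<exists>a>0. \<forall>\<^sub>F n in sequentially. \<forall>\<omega>\<in>space M.
                     \<bar>X n \<omega>\<bar> \<le> a \<longrightarrow> \<bar>Y n \<omega>\<bar> \<le> a \<longrightarrow> \<bar>Z n \<omega>\<bar> \<le> e"
  shows "conv_in_prob M Z 0"
  unfolding conv_in_prob_def
proof (intro allI impI)
  fix e :: real assume "e > 0"
  then obtain a where "a > 0" and ev: "\<forall>\<^sub>F n in sequentially. \<forall>\<omega>\<in>space M.
      \<bar>X n \<omega>\<bar> \<le> a \<longrightarrow> \<bar>Y n \<omega>\<bar> \<le> a \<longrightarrow> \<bar>Z n \<omega>\<bar> \<le> e"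
    using control by blast
  define E where "E V n = {\<omega> \<in> space M. \<bar>V n \<omega> - 0\<bar> > a}" for V :: "nat \<Rightarrow> 'a \<Rightarrow> real" and n
  have [measurable]: "E X n \<in> events" "E Y n \<in> events" for n
    unfolding E_def by measurable
  have lim: "(\<lambda>n. prob (E X n) + prob (E Y n)) \<longlonglongrightarrow> 0 + 0"
    using X Y \<open>a > 0\<close> unfolding conv_in_prob_def E_def by (intro tendsto_add) blast+
  have le: "\<forall>\<^sub>F n in sequentially. prob {\<omega> \<in> space M. \<bar>Z n \<omega> - 0\<bar> > e}
                   \<le> prob (E X n) + prob (E Y n)"
    using ev
  proof eventually_elim
    case (elim n)
    have "{\<omega> \<in> space M. \<bar>Z n \<omega> - 0\<bar> > e} \<subseteq> E X n \<union> E Y n"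
    proof
      fix \<omega> assume \<omega>: "\<omega> \<in> {\<omega> \<in> space M. \<bar>Z n \<omega> - 0\<bar> > e}"
      with elim have "\<not> (\<bar>X n \<omega>\<bar> \<le> a \<and> \<bar>Y n \<omega>\<bar> \<le> a)"
        by fastforce
      with \<omega> show "\<omega> \<in> E X n \<union> E Y n"
        by (auto simp: E_def)
    qed
    then have "prob {\<omega> \<in> space M. \<bar>Z n \<omega> - 0\<bar> > e} \<le> prob (E X n \<union> E Y n)"
      by (intro finite_measure_mono) simp_all
    also have "\<dots> \<le> prob (E X n) + prob (E Y n)"
      by (intro measure_Un_le) simp_all
    finally show ?case .
  qed
  show "(\<lambda>n. prob {\<omega> \<in> space M. \<bar>Z n \<omega> - 0\<bar> > e}) \<longlonglongrightarrow> 0"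
  proof (rule tendsto_sandwich[OF _ le tendsto_const])
    show "(\<lambda>n. prob (E X n) + prob (E Y n)) \<longlonglongrightarrow> 0"
      using lim by simp
  qed simp_all
qed

lemma conv_in_prob_zero_add:
  assumes [measurable]: "\<And>n. X n \<in> borel_measurable M" "\<And>n. Y n \<in> borel_measurable M"
    and "conv_in_prob M X 0" "conv_in_prob M Y 0"
  shows "conv_in_prob M (\<lambda>n \<omega>. X n \<omega> + Y n \<omega>) 0"
proof (rule conv_in_prob_zero_if_controlled[OF assms])
  fix e :: real assume "e > 0"
  then show "\<exists>a>0. \<forall>\<^sub>F n in sequentially. \<forall>\<omega>\<in>space M.
      \<bar>X n \<omega>\<bar> \<le> a \<longrightarrow> \<bar>Y n \<omega>\<bar> \<le> a \<longrightarrow> \<bar>X n \<omega> + Y n \<omega>\<bar> \<le> e"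
    by (intro exI[of _ "e / 2"] conjI always_eventually) auto
qed

lemma conv_in_prob_zero_diff:
  assumes [measurable]: "\<And>n. X n \<in> borel_measurable M" "\<And>n. Y n \<in> borel_measurable M"
    and "conv_in_prob M X 0" "conv_in_prob M Y 0"
  shows "conv_in_prob M (\<lambda>n \<omega>. X n \<omega> - Y n \<omega>) 0"
proof (rule conv_in_prob_zero_if_controlled[OF assms])
  fix e :: real assume "e > 0"
  then show "\<exists>a>0. \<forall>\<^sub>F n in sequentially. \<forall>\<omega>\<in>space M.
      \<bar>X n \<omega>\<bar> \<le> a \<longrightarrow> \<bar>Y n \<omega>\<bar> \<le> a \<longrightarrow> \<bar>X n \<omega> - Y n \<omega>\<bar> \<le> e"
    by (intro exI[of _ "e / 2"] conjI always_eventually) auto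
qed

lemma conv_in_prob_zero_mult:
  assumes [measurable]: "\<And>n. X n \<in> borel_measurable M" "\<And>n. Y n \<in> borel_measurable M"
    and "conv_in_prob M X 0" "conv_in_prob M Y 0"
  shows "conv_in_prob M (\<lambda>n \<omega>. X n \<omega> * Y n \<omega>) 0"
proof (rule conv_in_prob_zero_if_controlled[OF assms])
  fix e :: real assume "e > 0"
  have "\<bar>x * y\<bar> \<le> e" if "\<bar>x\<bar> \<le> min 1 e" "\<bar>y\<bar> \<le> min 1 e" for x y :: real
  proof -
    have "\<bar>x * y\<bar> \<le> min 1 e * 1"
      unfolding abs_mult using that by (intro mult_mono) auto
    then show ?thesis by linarith
  qed
  then show "\<exists>a>0. \<forall>\<^sub>F n in sequentially. \<forall>\<omega>\<in>space M.
      \<bar>X n \<omega>\<bar> \<le> a \<longrightarrow> \<bar>Y n \<omega>\<bar> \<le> a \<longrightarrow> \<bar>X n \<omega> * Y n \<omega>\<bar> \<le> e"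
    using \<open>e > 0\<close> by (intro exI[of _ "min 1 e"] conjI always_eventually) auto
qed

lemma conv_in_prob_zero_cmult:
  assumes [measurable]: "\<And>n. X n \<in> borel_measurable M" and "conv_in_prob M X 0"
  shows "conv_in_prob M (\<lambda>n \<omega>. c * X n \<omega>) 0"
proof (rule conv_in_prob_zero_if_controlled[OF assms(1,1,2,2)])
  fix e :: real assume "e > 0"
  have "\<bar>c * x\<bar> \<le> e" if "\<bar>x\<bar> \<le> e / (\<bar>c\<bar> + 1)" for x
  proof -
    have "\<bar>c * x\<bar> \<le> (\<bar>c\<bar> + 1) * (e / (\<bar>c\<bar> + 1))"
      unfolding abs_mult using that by (intro mult_mono) auto
    then show ?thesis by simp
  qed
  then show "\<exists>a>0. \<forall>\<^sub>F n in sequentially. \<forall>\<omega>\<in>space M.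
      \<bar>X n \<omega>\<bar> \<le> a \<longrightarrow> \<bar>X n \<omega>\<bar> \<le> a \<longrightarrow> \<bar>c * X n \<omega>\<bar> \<le> e"
    using \<open>e > 0\<close> by (intro exI[of _ "e / (\<bar>c\<bar> + 1)"] conjI always_eventually) auto
qed

lemma conv_in_prob_zero_sum:
  assumes "finite I" "\<And>i n. i \<in> I \<Longrightarrow> X i n \<in> borel_measurable M"
    and "\<And>i. i \<in> I \<Longrightarrow> conv_in_prob M (X i) 0"
  shows "conv_in_prob M (\<lambda>n \<omega>. \<Sum>i\<in>I. X i n \<omega>) 0"
  using assms
proof (induction I rule: finite_induct)
  case empty
  then show ?case by (simp add: conv_in_prob_def)
next
  case (insert j I)
  then show ?case
    by (simp add: sum.insert conv_in_prob_zero_add borel_measurable_sum)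
qed

(* Z need only agree with X / D where D does not vanish; elsewhere a quotient such as the ratio
   estimator takes the junk value x / 0 = 0. *)
lemma conv_in_prob_zero_ratio:
  assumes [measurable]: "\<And>n. X n \<in> borel_measurable M" "\<And>n. D n \<in> borel_measurable M"
    and X: "conv_in_prob M X 0" and D: "conv_in_prob M D c" and "c > 0"
    and Z: "\<forall>\<^sub>F n in sequentially. \<forall>\<omega>\<in>space M. D n \<omega> \<noteq> 0 \<longrightarrow> Z n \<omega> = X n \<omega> / D n \<omega>"
  shows "conv_in_prob M Z 0"
proof (rule conv_in_prob_zero_if_controlled[of X "\<lambda>n \<omega>. D n \<omega> - c"])
  show "conv_in_prob M (\<lambda>n \<omega>. D n \<omega> - c) 0"
    using D by (simp add: conv_in_prob_def)
  fix e :: real assume "e > 0"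
  define a where "a = min (c / 2) (e * c / 2)"
  have "\<bar>x / y\<bar> \<le> e" if "\<bar>x\<bar> \<le> a" "\<bar>y - c\<bar> \<le> a" for x y
  proof -
    have "\<bar>y - c\<bar> \<le> c / 2"
      using that(2) by (simp add: a_def)
    then have "y \<ge> c / 2"
      by linarith
    have "\<bar>x\<bar> \<le> e * c / 2"
      using that(1) by (simp add: a_def)
    then have "\<bar>x\<bar> / y \<le> (e * c / 2) / (c / 2)"
      using \<open>y \<ge> c / 2\<close> \<open>c > 0\<close> \<open>e > 0\<close> by (intro frac_le) auto
    then show ?thesis
      using \<open>y \<ge> c / 2\<close> \<open>c > 0\<close> by (simp add: abs_divide)
  qed
  moreover have "y \<noteq> 0" if "\<bar>y - c\<bar> \<le> a" for y
    using that \<open>c > 0\<close> by (auto simp: a_def abs_le_iff)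
  ultimately show "\<exists>a>0. \<forall>\<^sub>F n in sequentially. \<forall>\<omega>\<in>space M.
      \<bar>X n \<omega>\<bar> \<le> a \<longrightarrow> \<bar>D n \<omega> - c\<bar> \<le> a \<longrightarrow> \<bar>Z n \<omega>\<bar> \<le> e"
    using Z \<open>c > 0\<close> \<open>e > 0\<close>
    by (intro exI[of _ a] conjI) (auto simp: a_def elim!: eventually_mono)
qed (use X in auto)

lemma conv_in_prob_zero_if_second_moment:
  assumes [measurable]: "\<And>n. Z n \<in> borel_measurable M"
    and sq: "\<And>n. integrable M (\<lambda>\<omega>. (Z n \<omega>)\<^sup>2)"
    and lim: "(\<lambda>n. expectation (\<lambda>\<omega>. (Z n \<omega>)\<^sup>2)) \<longlonglongrightarrow> 0"
  shows "conv_in_prob M Z 0"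
  unfolding conv_in_prob_def
proof (intro allI impI)
  fix e :: real assume "e > 0"
  have le: "prob {\<omega> \<in> space M. \<bar>Z n \<omega> - 0\<bar> > e} \<le> expectation (\<lambda>\<omega>. (Z n \<omega>)\<^sup>2) / e\<^sup>2" for n
  proof -
    have "prob {\<omega> \<in> space M. \<bar>Z n \<omega> - 0\<bar> > e} \<le> prob {\<omega> \<in> space M. \<bar>Z n \<omega>\<bar> \<ge> e}"
      by (intro finite_measure_mono) auto
    also have "\<dots> \<le> expectation (\<lambda>\<omega>. (Z n \<omega>)\<^sup>2) / e\<^sup>2"
      using sq \<open>e > 0\<close> by (intro second_moment_method) auto
    finally show ?thesis .
  qed
  show "(\<lambda>n. prob {\<omega> \<in> space M. \<bar>Z n \<omega> - 0\<bar> > e}) \<longlonglongrightarrow> 0"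
  proof (rule tendsto_sandwich[OF _ _ tendsto_const])
    show "(\<lambda>n. expectation (\<lambda>\<omega>. (Z n \<omega>)\<^sup>2) / e\<^sup>2) \<longlonglongrightarrow> 0"
      using tendsto_divide_zero[OF lim] .
  qed (use le in simp_all)
qed

lemma expectation_square_sum_indep:
  fixes Z :: "'i \<Rightarrow> 'a \<Rightarrow> real"
  assumes indep: "indep_vars (\<lambda>_. borel) Z I" and "finite I"
    and sq: "\<And>i. i \<in> I \<Longrightarrow> integrable M (\<lambda>\<omega>. (Z i \<omega>)\<^sup>2)"
    and mean: "\<And>i. i \<in> I \<Longrightarrow> expectation (Z i) = 0"
  shows "integrable M (\<lambda>\<omega>. (\<Sum>i\<in>I. Z i \<omega>)\<^sup>2)"
    and "expectation (\<lambda>\<omega>. (\<Sum>i\<in>I. Z i \<omega>)\<^sup>2) = (\<Sum>i\<in>I. expectation (\<lambda>\<omega>. (Z i \<omega>)\<^sup>2))"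
proof -
  have [measurable]: "i \<in> I \<Longrightarrow> Z i \<in> borel_measurable M" for i
    using indep by (auto simp: indep_vars_def2)
  have cross: "integrable M (\<lambda>\<omega>. Z i \<omega> * Z j \<omega>) \<and>
      expectation (\<lambda>\<omega>. Z i \<omega> * Z j \<omega>) = (if i = j then expectation (\<lambda>\<omega>. (Z i \<omega>)\<^sup>2) else 0)"
    if "i \<in> I" "j \<in> I" for i j
  proof (cases "i = j")
    case True
    then show ?thesis using sq[OF \<open>i \<in> I\<close>] by (simp add: power2_eq_square)
  next
    case False
    have indep2: "indep_vars (\<lambda>_. borel) Z {i, j}"
      using that by (intro indep_vars_subset[OF indep]) auto
    have int: "k \<in> {i, j} \<Longrightarrow> integrable M (Z k)" for k
      using that sq by (auto intro: square_integrable_imp_integrable)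
    have "(\<lambda>\<omega>. Z i \<omega> * Z j \<omega>) = (\<lambda>\<omega>. \<Prod>k\<in>{i, j}. Z k \<omega>)"
      using False by auto
    moreover have "integrable M (\<lambda>\<omega>. \<Prod>k\<in>{i, j}. Z k \<omega>)"
      and "expectation (\<lambda>\<omega>. \<Prod>k\<in>{i, j}. Z k \<omega>) = (\<Prod>k\<in>{i, j}. expectation (Z k))"
      using indep_vars_integrable[OF _ indep2 int] indep_vars_lebesgue_integral[OF _ indep2 int]
      by auto
    ultimately show ?thesis
      using False mean that by simp
  qed
  have square: "(\<lambda>\<omega>. (\<Sum>i\<in>I. Z i \<omega>)\<^sup>2) = (\<lambda>\<omega>. \<Sum>i\<in>I. \<Sum>j\<in>I. Z i \<omega> * Z j \<omega>)"
    by (auto simp: power2_eq_square sum_product)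
  show "integrable M (\<lambda>\<omega>. (\<Sum>i\<in>I. Z i \<omega>)\<^sup>2)"
    unfolding square using cross by auto
  have "expectation (\<lambda>\<omega>. \<Sum>i\<in>I. \<Sum>j\<in>I. Z i \<omega> * Z j \<omega>)
      = (\<Sum>i\<in>I. \<Sum>j\<in>I. if i = j then expectation (\<lambda>\<omega>. (Z i \<omega>)\<^sup>2) else 0)"
    using cross by (simp add: Bochner_Integration.integral_sum)
  then show "expectation (\<lambda>\<omega>. (\<Sum>i\<in>I. Z i \<omega>)\<^sup>2) = (\<Sum>i\<in>I. expectation (\<lambda>\<omega>. (Z i \<omega>)\<^sup>2))"
    unfolding square using \<open>finite I\<close> by (simp add: sum.delta)
qed

lemma abs_expectation_diff_le:
  fixes h :: "real \<Rightarrow> real"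
  assumes B: "\<And>x. \<bar>h x\<bar> \<le> B" and [measurable]: "h \<in> borel_measurable borel"
    and close: "\<And>x y. \<bar>x - y\<bar> \<le> \<delta> \<Longrightarrow> \<bar>h x - h y\<bar> \<le> \<eta>" and "\<eta> \<ge> 0"
    and [measurable]: "U \<in> borel_measurable M" "V \<in> borel_measurable M"
  shows "\<bar>expectation (\<lambda>\<omega>. h (U \<omega>)) - expectation (\<lambda>\<omega>. h (V \<omega>))\<bar>
           \<le> \<eta> + 2 * B * prob {\<omega> \<in> space M. \<bar>U \<omega> - V \<omega>\<bar> > \<delta>}"
proof -
  define S where "S = {\<omega> \<in> space M. \<bar>U \<omega> - V \<omega>\<bar> > \<delta>}"
  have [measurable]: "S \<in> events"
    unfolding S_def by measurable
  have int: "integrable M (\<lambda>\<omega>. h (W \<omega>))" if [measurable]: "W \<in> borel_measurable M" for W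
    using B by (intro integrable_const_bound[of _ B]) auto
  have pointwise: "\<bar>h (U \<omega>) - h (V \<omega>)\<bar> \<le> \<eta> + 2 * B * indicator S \<omega>" if "\<omega> \<in> space M" for \<omega>
  proof (cases "\<omega> \<in> S")
    case True
    then show ?thesis
      using B[of "U \<omega>"] B[of "V \<omega>"] \<open>\<eta> \<ge> 0\<close> by simp
  next
    case False
    then show ?thesis
      using close[of "U \<omega>" "V \<omega>"] that by (simp add: S_def)
  qed
  have "\<bar>expectation (\<lambda>\<omega>. h (U \<omega>)) - expectation (\<lambda>\<omega>. h (V \<omega>))\<bar>
      \<le> expectation (\<lambda>\<omega>. \<bar>h (U \<omega>) - h (V \<omega>)\<bar>)"
    using int[of U] int[of V] by (simp flip: Bochner_Integration.integral_diff)
  also have "\<dots> \<le> expectation (\<lambda>\<omega>. \<eta> + 2 * B * indicator S \<omega>)"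
    using pointwise int[of U] int[of V] by (intro integral_mono) (auto simp: emeasure_eq_measure)
  also have "\<dots> = \<eta> + 2 * B * prob S"
    by (simp add: prob_space emeasure_eq_measure)
  finally show ?thesis
    by (simp add: S_def)
qed

lemma integral_diff_tendsto_zero_if_conv_in_prob:
  fixes h :: "real \<Rightarrow> real"
  assumes h: "uniformly_continuous_on UNIV h" and B: "\<And>x. \<bar>h x\<bar> \<le> B"
    and [measurable]: "\<And>n. A n \<in> borel_measurable M" "\<And>n. Y n \<in> borel_measurable M"
    and conv: "conv_in_prob M (\<lambda>n \<omega>. Y n \<omega> - A n \<omega>) 0"
  shows "(\<lambda>n. expectation (\<lambda>\<omega>. h (Y n \<omega>)) - expectation (\<lambda>\<omega>. h (A n \<omega>))) \<longlonglongrightarrow> 0"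
proof (rule tendstoI)
  fix \<epsilon> :: real assume "\<epsilon> > 0"
  then have "\<epsilon> / 2 > 0"
    by simp
  then obtain \<delta> where "\<delta> > 0" and uc: "\<forall>y\<in>UNIV. \<forall>x\<in>UNIV. \<bar>x - y\<bar> < \<delta> \<longrightarrow> \<bar>h x - h y\<bar> < \<epsilon> / 2"
    using h unfolding uniformly_continuous_on_def dist_real_def by blast
  have close: "\<bar>h x - h y\<bar> \<le> \<epsilon> / 2" if "\<bar>x - y\<bar> \<le> \<delta> / 2" for x y
  proof -
    have "\<bar>x - y\<bar> < \<delta>"
      using that \<open>\<delta> > 0\<close> by linarith
    then show ?thesis
      using uc by (meson UNIV_I less_imp_le)
  qed
  have [measurable]: "h \<in> borel_measurable borel"
    using h by (intro borel_measurable_continuous_onI uniformly_continuous_imp_continuous)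
  define K where "K = 2 * B + 1"
  have "K > 0"
    using B[of 0] by (simp add: K_def)
  have "(\<lambda>n. prob {\<omega> \<in> space M. \<bar>Y n \<omega> - A n \<omega>\<bar> > \<delta> / 2}) \<longlonglongrightarrow> 0"
    using conv[unfolded conv_in_prob_def, rule_format, of "\<delta> / 2"] \<open>\<delta> > 0\<close> by simp
  then have "\<forall>\<^sub>F n in sequentially. prob {\<omega> \<in> space M. \<bar>Y n \<omega> - A n \<omega>\<bar> > \<delta> / 2} < \<epsilon> / (2 * K)"
    by (rule order_tendstoD(2)) (use \<open>\<epsilon> > 0\<close> \<open>K > 0\<close> in simp)
  then show "\<forall>\<^sub>F n in sequentially.
      dist (expectation (\<lambda>\<omega>. h (Y n \<omega>)) - expectation (\<lambda>\<omega>. h (A n \<omega>))) 0 < \<epsilon>"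
  proof eventually_elim
    case (elim n)
    let ?P = "prob {\<omega> \<in> space M. \<bar>Y n \<omega> - A n \<omega>\<bar> > \<delta> / 2}"
    have "2 * B * ?P \<le> K * ?P"
      by (intro mult_right_mono) (simp_all add: K_def)
    also have "\<dots> < K * (\<epsilon> / (2 * K))"
      using elim \<open>K > 0\<close> by (intro mult_strict_left_mono)
    also have "\<dots> = \<epsilon> / 2"
      using \<open>K > 0\<close> by simp
    finally have "2 * B * ?P < \<epsilon> / 2" .
    moreover have "\<bar>expectation (\<lambda>\<omega>. h (Y n \<omega>)) - expectation (\<lambda>\<omega>. h (A n \<omega>))\<bar> \<le> \<epsilon> / 2 + 2 * B * ?P"
      by (rule abs_expectation_diff_le[OF B]) (use close \<open>\<epsilon> > 0\<close> in auto)
    ultimately show ?case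
      by (simp add: dist_real_def)
  qed
qed

lemma conv_in_distr_slutsky:
  assumes L: "real_distribution L"
    and [measurable]: "\<And>n. A n \<in> borel_measurable M" "\<And>n. Y n \<in> borel_measurable M"
    and A: "conv_in_distr M A L" and conv: "conv_in_prob M (\<lambda>n \<omega>. Y n \<omega> - A n \<omega>) 0"
  shows "conv_in_distr M Y L"
  unfolding conv_in_distr_def
proof (rule integral_cts_step_conv_imp_weak_conv)
  fix x y :: real assume "x < y"
  have bounded: "\<bar>cts_step x y t\<bar> \<le> 1" for t
    using \<open>x < y\<close> by (auto simp: cts_step_def field_simps)
  have uc: "uniformly_continuous_on UNIV (cts_step x y)"
    using \<open>x < y\<close> by (rule cts_step_uniformly_continuous)
  then have [measurable]: "cts_step x y \<in> borel_measurable borel"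
    by (intro borel_measurable_continuous_onI uniformly_continuous_imp_continuous)
  have "isCont (cts_step x y) t" for t
    using uniformly_continuous_imp_continuous[OF uc] by (simp add: continuous_on_eq_continuous_at)
  moreover have "real_distribution (distr M borel (A n))" for n
    by simp
  ultimately have "(\<lambda>n. integral\<^sup>L (distr M borel (A n)) (cts_step x y)) \<longlonglongrightarrow> integral\<^sup>L L (cts_step x y)"
    using L A bounded unfolding conv_in_distr_def
    by (intro weak_conv_imp_integral_bdd_continuous_conv[where B = 1]) auto
  then have "(\<lambda>n. expectation (\<lambda>\<omega>. cts_step x y (A n \<omega>))) \<longlonglongrightarrow> integral\<^sup>L L (cts_step x y)"
    by (simp add: integral_distr)
  from tendsto_add[OF integral_diff_tendsto_zero_if_conv_in_prob[OF uc bounded _ _ conv] this]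
  show "(\<lambda>n. integral\<^sup>L (distr M borel (Y n)) (cts_step x y)) \<longlonglongrightarrow> integral\<^sup>L L (cts_step x y)"
    by (simp add: integral_distr)
qed (use L in auto)

lemma conv_in_distr_cmult:
  assumes L: "real_distribution L" and [measurable]: "\<And>n. Y n \<in> borel_measurable M"
    and Y: "conv_in_distr M Y L"
  shows "conv_in_distr M (\<lambda>n \<omega>. c * Y n \<omega>) (distr L borel ((*) c))"
proof -
  interpret L: real_distribution L by fact
  have "(\<lambda>n. integral\<^sup>L (distr M borel (\<lambda>\<omega>. c * Y n \<omega>)) f)
      \<longlonglongrightarrow> integral\<^sup>L (distr L borel ((*) c)) f"
    if "\<And>x. isCont f x" "\<And>x. \<bar>f x\<bar> \<le> 1" for f :: "real \<Rightarrow> real"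
  proof -
    have [measurable]: "f \<in> borel_measurable borel"
      using that by (intro borel_measurable_continuous_onI continuous_at_imp_continuous_on) auto
    have "(\<lambda>n. integral\<^sup>L (distr M borel (Y n)) (\<lambda>x. f (c * x))) \<longlonglongrightarrow> integral\<^sup>L L (\<lambda>x. f (c * x))"
      using L Y that unfolding conv_in_distr_def
      by (intro weak_conv_imp_integral_bdd_continuous_conv[where B = 1] isCont_o2[OF _ that(1)])
        (auto intro: continuous_intros)
    then show ?thesis
      by (simp add: integral_distr)
  qed
  then show ?thesis
    unfolding conv_in_distr_def by (intro integral_bdd_continuous_conv_imp_weak_conv) auto
qed

lemma conv_in_distr_normal_law_zero:
  assumes [measurable]: "\<And>n. Y n \<in> borel_measurable M" and "conv_in_prob M Y 0"
  shows "conv_in_distr M Y (normal_law 0)"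
proof -
  have zero: "conv_in_distr M (\<lambda>n \<omega>. 0) (normal_law 0)"
    by (simp add: conv_in_distr_def normal_law_zero weak_conv_m_def weak_conv_def)
  have small: "conv_in_prob M (\<lambda>n \<omega>. Y n \<omega> - 0) 0"
    using assms(2) by simp
  show ?thesis
    by (rule conv_in_distr_slutsky[OF real_distribution_normal_law _ _ zero small]) measurable
qed

end

section \<open>Sums of i.i.d. variables\<close>

locale iid_sample = prob_space \<Omega> for \<Omega> :: "'a measure" +
  fixes PX :: "'x measure" and X :: "nat \<Rightarrow> 'a \<Rightarrow> 'x"
  assumes indep: "indep_vars (\<lambda>_. PX) X UNIV"
    and ident: "\<And>i. distr \<Omega> PX (X i) = PX"
begin

lemma measurable_X [measurable]: "X i \<in> measurable \<Omega> PX"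
  using indep by (auto simp: indep_vars_def2)

sublocale PX: prob_space PX
  using prob_space_distr[OF measurable_X, of 0] ident[of 0] by simp

lemma
  fixes h :: "'x \<Rightarrow> real"
  assumes [measurable]: "h \<in> borel_measurable PX"
  shows integrable_comp_X_iff: "integrable \<Omega> (\<lambda>\<omega>. h (X i \<omega>)) \<longleftrightarrow> integrable PX h"
    and integral_comp_X: "(\<integral>\<omega>. h (X i \<omega>) \<partial>\<Omega>) = (\<integral>x. h x \<partial>PX)"
    and distr_comp_X: "distr \<Omega> borel (\<lambda>\<omega>. h (X i \<omega>)) = distr PX borel h"
  using integrable_distr_eq[of "X i" \<Omega> PX h] integral_distr[of "X i" \<Omega> PX h]
    distr_distr[of h PX borel "X i" \<Omega>] ident[of i]
  by (simp_all add: comp_def)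

context
  fixes \<psi> :: "'x \<Rightarrow> real"
  assumes meas [measurable]: "\<psi> \<in> borel_measurable PX"
    and sq: "integrable PX (\<lambda>x. (\<psi> x)\<^sup>2)" and mean: "(\<integral>x. \<psi> x \<partial>PX) = 0"
begin

lemma measurable_square [measurable]: "(\<lambda>x. (\<psi> x)\<^sup>2) \<in> borel_measurable PX"
  by measurable

lemma
  shows integrable_square_comp_X: "integrable \<Omega> (\<lambda>\<omega>. (\<psi> (X i \<omega>))\<^sup>2)"
    and expectation_comp_X: "expectation (\<lambda>\<omega>. \<psi> (X i \<omega>)) = 0"
    and expectation_square_comp_X: "expectation (\<lambda>\<omega>. (\<psi> (X i \<omega>))\<^sup>2) = (\<integral>x. (\<psi> x)\<^sup>2 \<partial>PX)"
  using sq mean integrable_comp_X_iff[OF measurable_square] integral_comp_X[OF measurable_square]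
    integral_comp_X[OF meas]
  by simp_all

lemma iid_sum_square_expectation:
  shows "integrable \<Omega> (\<lambda>\<omega>. (\<Sum>i<n. \<psi> (X i \<omega>))\<^sup>2)"
    and "expectation (\<lambda>\<omega>. (\<Sum>i<n. \<psi> (X i \<omega>))\<^sup>2) = real n * (\<integral>x. (\<psi> x)\<^sup>2 \<partial>PX)"
proof -
  have indep_\<psi>: "indep_vars (\<lambda>_. borel) (\<lambda>i \<omega>. \<psi> (X i \<omega>)) {..<n}"
    using indep_vars_compose2[OF indep, of "\<lambda>_. \<psi>" "\<lambda>_. borel"]
    by (rule indep_vars_subset) simp_all
  show "integrable \<Omega> (\<lambda>\<omega>. (\<Sum>i<n. \<psi> (X i \<omega>))\<^sup>2)"
    and "expectation (\<lambda>\<omega>. (\<Sum>i<n. \<psi> (X i \<omega>))\<^sup>2) = real n * (\<integral>x. (\<psi> x)\<^sup>2 \<partial>PX)"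
    using expectation_square_sum_indep[OF indep_\<psi>] integrable_square_comp_X expectation_comp_X
      expectation_square_comp_X
    by simp_all
qed

lemma iid_sum_scaled_conv_in_prob_zero:
  assumes lim: "(\<lambda>n. real n / (c n)\<^sup>2) \<longlonglongrightarrow> 0"
  shows "conv_in_prob \<Omega> (\<lambda>n \<omega>. (\<Sum>i<n. \<psi> (X i \<omega>)) / c n) 0"
proof (rule conv_in_prob_zero_if_second_moment)
  show "(\<lambda>\<omega>. (\<Sum>i<n. \<psi> (X i \<omega>)) / c n) \<in> borel_measurable \<Omega>" for n
    by measurable
  show "integrable \<Omega> (\<lambda>\<omega>. ((\<Sum>i<n. \<psi> (X i \<omega>)) / c n)\<^sup>2)" for n
    using iid_sum_square_expectation(1) by (simp add: power_divide)
  have "(\<lambda>n. (\<integral>x. (\<psi> x)\<^sup>2 \<partial>PX) * (real n / (c n)\<^sup>2)) \<longlonglongrightarrow> 0"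
    using tendsto_mult_right_zero[OF lim] .
  then show "(\<lambda>n. expectation (\<lambda>\<omega>. ((\<Sum>i<n. \<psi> (X i \<omega>)) / c n)\<^sup>2)) \<longlonglongrightarrow> 0"
    by (simp add: power_divide iid_sum_square_expectation(2) ac_simps)
qed

lemma iid_sum_conv_in_distr_normal_law_pos:
  assumes "(\<integral>x. (\<psi> x)\<^sup>2 \<partial>PX) > 0"
  shows "conv_in_distr \<Omega> (\<lambda>n \<omega>. (\<Sum>i<n. \<psi> (X i \<omega>)) / sqrt (real n)) (normal_law (\<integral>x. (\<psi> x)\<^sup>2 \<partial>PX))"
proof -
  define \<sigma> where "\<sigma> = sqrt (\<integral>x. (\<psi> x)\<^sup>2 \<partial>PX)"
  have "\<sigma> > 0" "\<sigma>\<^sup>2 = (\<integral>x. (\<psi> x)\<^sup>2 \<partial>PX)"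
    using assms by (simp_all add: \<sigma>_def)
  then have "variance (\<lambda>\<omega>. \<psi> (X i \<omega>)) = \<sigma>\<^sup>2" for i
    using expectation_comp_X expectation_square_comp_X by simp
  moreover have "indep_vars (\<lambda>_. borel) (\<lambda>i \<omega>. \<psi> (X i \<omega>)) UNIV"
    using indep_vars_compose2[OF indep, of "\<lambda>_. \<psi>" "\<lambda>_. borel"] by simp
  ultimately have "conv_in_distr \<Omega> (\<lambda>n \<omega>. (\<Sum>i<n. \<psi> (X i \<omega>)) / sqrt (real n * \<sigma>\<^sup>2))
      std_normal_distribution"
    unfolding conv_in_distr_def
    using \<open>\<sigma> > 0\<close> expectation_comp_X integrable_square_comp_X distr_comp_X[OF meas]
    by (intro central_limit_theorem_zero_mean) auto
  then have "conv_in_distr \<Omega> (\<lambda>n \<omega>. \<sigma> * ((\<Sum>i<n. \<psi> (X i \<omega>)) / sqrt (real n * \<sigma>\<^sup>2)))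
      (distr std_normal_distribution borel ((*) \<sigma>))"
    by (intro conv_in_distr_cmult[OF real_dist_normal_dist]) measurable
  moreover have "\<sigma> * (t / sqrt (real n * \<sigma>\<^sup>2)) = t / sqrt (real n)" for t n
    using \<open>\<sigma> > 0\<close> by (simp add: real_sqrt_mult)
  ultimately show ?thesis
    by (simp add: normal_law_def \<sigma>_def)
qed

lemma iid_sum_conv_in_distr_normal_law:
  "conv_in_distr \<Omega> (\<lambda>n \<omega>. (\<Sum>i<n. \<psi> (X i \<omega>)) / sqrt (real n)) (normal_law (\<integral>x. (\<psi> x)\<^sup>2 \<partial>PX))"
proof (cases "(\<integral>x. (\<psi> x)\<^sup>2 \<partial>PX) = 0")
  case True
  have "conv_in_prob \<Omega> (\<lambda>n \<omega>. (\<Sum>i<n. \<psi> (X i \<omega>)) / sqrt (real n)) 0"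
  proof (rule conv_in_prob_zero_if_second_moment)
    show "integrable \<Omega> (\<lambda>\<omega>. ((\<Sum>i<n. \<psi> (X i \<omega>)) / sqrt (real n))\<^sup>2)" for n
      using iid_sum_square_expectation(1) by (simp add: power_divide)
    show "(\<lambda>n. expectation (\<lambda>\<omega>. ((\<Sum>i<n. \<psi> (X i \<omega>)) / sqrt (real n))\<^sup>2)) \<longlonglongrightarrow> 0"
      using True by (simp add: power_divide iid_sum_square_expectation(2))
  qed measurable
  then show ?thesis
    unfolding True by (rule conv_in_distr_normal_law_zero[rotated]) measurable
next
  case False
  then show ?thesis
    by (intro iid_sum_conv_in_distr_normal_law_pos) (simp add: order_less_le)
qed

end

end

section \<open>Expansion of the ratio estimator\<close>

lemma var_of_centered: "(\<integral>x. \<psi> x \<partial>P) = 0 \<Longrightarrow> var_of P \<psi> = (\<integral>x. (\<psi> x)\<^sup>2 \<partial>P)"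
  by (simp add: var_of_def)

lemma Phi_centered:
  fixes \<phi> :: "'x \<Rightarrow> 'f \<Rightarrow> real"
  assumes "prob_space PX"
    and meas: "\<And>m. m < M \<Longrightarrow> (\<lambda>x. \<phi> x (fs m)) \<in> borel_measurable PX"
    and sq: "\<And>m. m < M \<Longrightarrow> integrable PX (\<lambda>x. (\<phi> x (fs m))\<^sup>2)"
    and mean: "\<And>m. m < M \<Longrightarrow> (\<integral>x. \<phi> x (fs m) \<partial>PX) = 0"
  shows "Phi \<phi> M fs \<in> borel_measurable PX"
    and "integrable PX (\<lambda>x. (Phi \<phi> M fs x)\<^sup>2)"
    and "(\<integral>x. Phi \<phi> M fs x \<partial>PX) = 0"
proof -
  interpret PX: prob_space PX by fact
  have Phi_eq: "Phi \<phi> M fs = (\<lambda>x. inverse (real M) * (\<Sum>m<M. \<phi> x (fs m)))"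
    by (simp add: Phi_def divide_inverse_commute fun_eq_iff)
  show "Phi \<phi> M fs \<in> borel_measurable PX"
    unfolding Phi_eq using meas by (intro borel_measurable_times borel_measurable_sum) auto
  show "integrable PX (\<lambda>x. (Phi \<phi> M fs x)\<^sup>2)"
    unfolding Phi_eq using meas sq by (intro square_integrable_cmult square_integrable_sum) auto
  have "integrable PX (\<lambda>x. \<phi> x (fs m))" if "m < M" for m
    using meas[OF that] sq[OF that] by (rule PX.square_integrable_imp_integrable)
  then show "(\<integral>x. Phi \<phi> M fs x \<partial>PX) = 0"
    unfolding Phi_eq using mean by simp
qed

lemma phi0_centered:
  assumes "prob_space PX" and meas: "(\<lambda>x. gbase x f) \<in> borel_measurable PX"
    and sq: "integrable PX (\<lambda>x. (gbase x f)\<^sup>2)" and repr: "d fbase f = (\<integral>x. gbase x f \<partial>PX)"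
  shows "(\<lambda>x. phi0 gbase d fbase x f) \<in> borel_measurable PX"
    and "integrable PX (\<lambda>x. (phi0 gbase d fbase x f)\<^sup>2)"
    and "(\<integral>x. phi0 gbase d fbase x f \<partial>PX) = 0"
proof -
  interpret PX: prob_space PX by fact
  show "(\<lambda>x. phi0 gbase d fbase x f) \<in> borel_measurable PX"
    using meas by (simp add: phi0_def)
  show "integrable PX (\<lambda>x. (phi0 gbase d fbase x f)\<^sup>2)"
    using square_integrable_add[OF meas _ sq, of "\<lambda>_. - d fbase f"] by (simp add: phi0_def)
  have "integrable PX (\<lambda>x. gbase x f)"
    using meas sq by (rule PX.square_integrable_imp_integrable)
  then show "(\<integral>x. phi0 gbase d fbase x f \<partial>PX) = 0"
    using repr by (simp add: phi0_def PX.prob_space)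
qed

lemma psiM_eq: "psiM phi1 gbase d ftheta fbase M fs =
    (\<lambda>x. inverse (mu0 d fbase M fs) * Phi phi1 M fs x
         + (- rM d ftheta fbase M fs / mu0 d fbase M fs) * Phi (phi0 gbase d fbase) M fs x)"
  by (simp add: psiM_def fun_eq_iff divide_inverse_commute algebra_simps)

lemma psiM_centered:
  assumes "prob_space PX"
    and [measurable]: "Phi phi1 M fs \<in> borel_measurable PX"
    and Phi1_sq: "integrable PX (\<lambda>x. (Phi phi1 M fs x)\<^sup>2)"
    and Phi1_mean: "(\<integral>x. Phi phi1 M fs x \<partial>PX) = 0"
    and [measurable]: "Phi (phi0 gbase d fbase) M fs \<in> borel_measurable PX"
    and Phi0_sq: "integrable PX (\<lambda>x. (Phi (phi0 gbase d fbase) M fs x)\<^sup>2)"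
    and Phi0_mean: "(\<integral>x. Phi (phi0 gbase d fbase) M fs x \<partial>PX) = 0"
  shows "psiM phi1 gbase d ftheta fbase M fs \<in> borel_measurable PX"
    and "integrable PX (\<lambda>x. (psiM phi1 gbase d ftheta fbase M fs x)\<^sup>2)"
    and "(\<integral>x. psiM phi1 gbase d ftheta fbase M fs x \<partial>PX) = 0"
proof -
  interpret PX: prob_space PX by fact
  show "psiM phi1 gbase d ftheta fbase M fs \<in> borel_measurable PX"
    unfolding psiM_eq by measurable
  show "integrable PX (\<lambda>x. (psiM phi1 gbase d ftheta fbase M fs x)\<^sup>2)"
    unfolding psiM_eq using Phi1_sq Phi0_sq
    by (intro square_integrable_add square_integrable_cmult) measurable
  have "integrable PX (Phi phi1 M fs)" "integrable PX (Phi (phi0 gbase d fbase) M fs)"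
    using Phi1_sq Phi0_sq by (auto intro: PX.square_integrable_imp_integrable)
  then show "(\<integral>x. psiM phi1 gbase d ftheta fbase M fs x \<partial>PX) = 0"
    unfolding psiM_eq using Phi1_mean Phi0_mean by simp
qed

lemma Phi_phi1_eq:
  assumes "mu0 d fbase M fs \<noteq> 0"
  shows "Phi phi1 M fs x = mu0 d fbase M fs * psiM phi1 gbase d ftheta fbase M fs x
                         + rM d ftheta fbase M fs * Phi (phi0 gbase d fbase) M fs x"
  using assms by (simp add: psiM_def field_simps)

lemma mean_of_sample_means:
  "(\<Sum>m<M. (\<Sum>i<n. h (x i) (fs m)) / real n) / real M = (\<Sum>i<n. Phi h M fs (x i)) / real n"
  unfolding Phi_def sum_divide_distrib[symmetric] by (subst sum.swap) simp

definition lin_remainder :: "('x \<Rightarrow> 't \<Rightarrow> 'f \<Rightarrow> real) \<Rightarrow> (nat \<Rightarrow> 'w \<Rightarrow> 'x) \<Rightarrow> ('f \<Rightarrow> 'f \<Rightarrow> real)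
    \<Rightarrow> ('t \<Rightarrow> 'f) \<Rightarrow> ('x \<Rightarrow> 'f \<Rightarrow> real) \<Rightarrow> 'f \<Rightarrow> nat \<Rightarrow> 'w \<Rightarrow> real" where
  "lin_remainder g X d ftheta phi1 f n \<omega> =
     sqrt (real n) * (dnF g X n f \<omega> - dF d ftheta f - (\<Sum>i<n. phi1 (X i \<omega>) f) / real n)"

lemma mean_dn_base_expansion:
  assumes "n > 0"
  shows "(\<Sum>m<M. dn_base gbase X n (fs m) \<omega>) / real M
           = mu0 d fbase M fs + (\<Sum>i<n. Phi (phi0 gbase d fbase) M fs (X i \<omega>)) / real n"
proof -
  have "dn_base gbase X n f \<omega> = (\<Sum>i<n. phi0 gbase d fbase (X i \<omega>) f) / real n + d fbase f" for f
    using assms by (simp add: dn_base_def phi0_def sum_subtractf field_simps)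
  then have "(\<Sum>m<M. dn_base gbase X n (fs m) \<omega>) / real M
      = mu0 d fbase M fs + (\<Sum>m<M. (\<Sum>i<n. phi0 gbase d fbase (X i \<omega>) (fs m)) / real n) / real M"
    by (simp add: sum.distrib add_divide_distrib mu0_def)
  then show ?thesis
    using mean_of_sample_means[where h = "phi0 gbase d fbase" and x = "\<lambda>i. X i \<omega>" and fs = fs]
    by simp
qed

lemma mean_dnF_expansion:
  assumes "n > 0"
  shows "(\<Sum>m<M. dnF g X n (fs m) \<omega>) / real M
           = mu1 d ftheta M fs + (\<Sum>i<n. Phi phi1 M fs (X i \<omega>)) / real n
             + ((\<Sum>m<M. lin_remainder g X d ftheta phi1 (fs m) n \<omega>) / real M) / sqrt (real n)"
proof -
  have "dnF g X n f \<omega> = dF d ftheta f + (\<Sum>i<n. phi1 (X i \<omega>) f) / real n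
                          + lin_remainder g X d ftheta phi1 f n \<omega> / sqrt (real n)" for f
    using assms by (simp add: lin_remainder_def)
  then have "(\<Sum>m<M. dnF g X n (fs m) \<omega>) / real M
      = mu1 d ftheta M fs + (\<Sum>m<M. (\<Sum>i<n. phi1 (X i \<omega>) (fs m)) / real n) / real M
        + ((\<Sum>m<M. lin_remainder g X d ftheta phi1 (fs m) n \<omega>) / real M) / sqrt (real n)"
    by (simp add: sum.distrib add_divide_distrib mu1_def sum_divide_distrib[symmetric])
  then show ?thesis
    using mean_of_sample_means[where h = phi1 and x = "\<lambda>i. X i \<omega>" and fs = fs]
    by simp
qed

lemma ratio_expansion:
  fixes q c r S W \<rho> :: real
  assumes "q > 0" and D: "c + W / q\<^sup>2 \<noteq> 0"
  shows "q * ((r * c + (c * S + r * W) / q\<^sup>2 + \<rho> / q) / (c + W / q\<^sup>2) - r) - S / q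
           = (\<rho> - S * W / q ^ 3) / (c + W / q\<^sup>2)"
    (is "q * (?N / ?D - r) - S / q = _")
proof -
  have "?N - r * ?D = c * S / q\<^sup>2 + \<rho> / q"
    by (simp add: add_divide_distrib algebra_simps)
  then have "?N / ?D - r = (c * S / q\<^sup>2 + \<rho> / q) / ?D"
    using D by (simp add: field_simps)
  moreover have "q * (c * S / q\<^sup>2 + \<rho> / q) = c * S / q + \<rho>"
    using \<open>q > 0\<close> by (simp add: field_simps power2_eq_square)
  ultimately have "q * (?N / ?D - r) = (c * S / q + \<rho>) / ?D"
    by (metis times_divide_eq_right)
  also have "\<dots> - S / q = (c * S / q + \<rho> - S * ?D / q) / ?D"
    using D by (simp add: field_simps)
  also have "c * S / q + \<rho> - S * ?D / q = \<rho> - S * W / q ^ 3"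
    using \<open>q > 0\<close> by (simp add: field_simps power2_eq_square power3_eq_cube)
  finally show ?thesis .
qed

lemma powr_three_quarters_squared:
  fixes x :: real
  assumes "x \<ge> 0"
  shows "(x powr (3/4))\<^sup>2 = sqrt x ^ 3"
proof -
  have "(x powr (3/4))\<^sup>2 = x powr (1 + 1/2)"
    by (simp add: power2_eq_square flip: powr_add)
  also have "\<dots> = x * sqrt x"
    by (subst powr_add) (use assms in \<open>simp add: powr_half_sqrt\<close>)
  also have "\<dots> = sqrt x ^ 3"
    using assms by (simp add: power3_eq_cube)
  finally show ?thesis .
qed

lemma rhat_expansion:
  fixes X :: "nat \<Rightarrow> 'w \<Rightarrow> 'x" and \<omega> :: 'w and g phi1 gbase ftheta
  assumes "n > 0" and mu0: "mu0 d fbase M fs \<noteq> 0"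
  defines "S \<equiv> \<Sum>i<n. psiM phi1 gbase d ftheta fbase M fs (X i \<omega>)"
    and "W \<equiv> \<Sum>i<n. Phi (phi0 gbase d fbase) M fs (X i \<omega>)"
    and "\<rho> \<equiv> (\<Sum>m<M. lin_remainder g X d ftheta phi1 (fs m) n \<omega>) / real M"
  assumes D: "mu0 d fbase M fs + W / real n \<noteq> 0"
  shows "sqrt (real n) * (rhat g gbase X M fs n \<omega> - rM d ftheta fbase M fs) - S / sqrt (real n)
           = (\<rho> - S / real n powr (3/4) * (W / real n powr (3/4))) / (mu0 d fbase M fs + W / real n)"
proof -
  have "Phi phi1 M fs x = mu0 d fbase M fs * psiM phi1 gbase d ftheta fbase M fs x
                          + rM d ftheta fbase M fs * Phi (phi0 gbase d fbase) M fs x" for x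
    by (rule Phi_phi1_eq[OF mu0])
  then have Phi1: "(\<Sum>i<n. Phi phi1 M fs (X i \<omega>)) = mu0 d fbase M fs * S + rM d ftheta fbase M fs * W"
    unfolding S_def W_def by (simp add: sum.distrib sum_distrib_left)
  have mu1: "mu1 d ftheta M fs = rM d ftheta fbase M fs * mu0 d fbase M fs"
    using mu0 by (simp add: rM_def)
  have "rhat g gbase X M fs n \<omega>
      = (mu1 d ftheta M fs + (\<Sum>i<n. Phi phi1 M fs (X i \<omega>)) / real n + \<rho> / sqrt (real n))
        / (mu0 d fbase M fs + W / real n)"
    unfolding rhat_def \<rho>_def W_def
    by (subst mean_dnF_expansion[OF \<open>n > 0\<close>], subst mean_dn_base_expansion[OF \<open>n > 0\<close>]) (rule refl)
  also have "\<dots> = (rM d ftheta fbase M fs * mu0 d fbase M fs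
           + (mu0 d fbase M fs * S + rM d ftheta fbase M fs * W) / real n + \<rho> / sqrt (real n))
        / (mu0 d fbase M fs + W / real n)"
    unfolding Phi1 mu1 ..
  finally have "rhat g gbase X M fs n \<omega> = \<dots>" .
  moreover have "S * W / sqrt (real n) ^ 3 = S / real n powr (3/4) * (W / real n powr (3/4))"
    using powr_three_quarters_squared[of "real n"] by (simp add: power2_eq_square)
  moreover have "sqrt (real n) > 0" "(sqrt (real n))\<^sup>2 = real n"
    using \<open>n > 0\<close> by simp_all
  ultimately show ?thesis
    using ratio_expansion[where q = "sqrt (real n)" and c = "mu0 d fbase M fs"
        and r = "rM d ftheta fbase M fs" and S = S and W = W and \<rho> = \<rho>] D
    by simp
qed

context iid_sample
begin

lemma rhat_remainder_conv_in_prob: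
  assumes mu0: "mu0 d fbase M fs > 0"
    and [measurable]: "psiM phi1 gbase d ftheta fbase M fs \<in> borel_measurable PX"
    and psi_sq: "integrable PX (\<lambda>x. (psiM phi1 gbase d ftheta fbase M fs x)\<^sup>2)"
    and psi_mean: "(\<integral>x. psiM phi1 gbase d ftheta fbase M fs x \<partial>PX) = 0"
    and [measurable]: "Phi (phi0 gbase d fbase) M fs \<in> borel_measurable PX"
    and Phi0_sq: "integrable PX (\<lambda>x. (Phi (phi0 gbase d fbase) M fs x)\<^sup>2)"
    and Phi0_mean: "(\<integral>x. Phi (phi0 gbase d fbase) M fs x \<partial>PX) = 0"
    and [measurable]: "\<And>m n. m < M \<Longrightarrow> lin_remainder g X d ftheta phi1 (fs m) n \<in> borel_measurable \<Omega>"
    and rem: "\<And>m. m < M \<Longrightarrow> conv_in_prob \<Omega> (lin_remainder g X d ftheta phi1 (fs m)) 0"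
  shows "conv_in_prob \<Omega>
           (\<lambda>n \<omega>. sqrt (real n) * (rhat g gbase X M fs n \<omega> - rM d ftheta fbase M fs)
                   - (\<Sum>i<n. psiM phi1 gbase d ftheta fbase M fs (X i \<omega>)) / sqrt (real n)) 0"
proof -
  define S where "S n \<omega> = (\<Sum>i<n. psiM phi1 gbase d ftheta fbase M fs (X i \<omega>))" for n \<omega>
  define W where "W n \<omega> = (\<Sum>i<n. Phi (phi0 gbase d fbase) M fs (X i \<omega>))" for n \<omega>
  define \<rho> where "\<rho> n \<omega> = (\<Sum>m<M. lin_remainder g X d ftheta phi1 (fs m) n \<omega>) / real M" for n \<omega>
  define c :: "nat \<Rightarrow> real" where "c n = real n powr (3/4)" for n
  have [measurable]: "S n \<in> borel_measurable \<Omega>" "W n \<in> borel_measurable \<Omega>" "\<rho> n \<in> borel_measurable \<Omega>" for n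
    unfolding S_def W_def \<rho>_def by measurable
  have "conv_in_prob \<Omega> (\<lambda>n \<omega>. inverse (real M) * (\<Sum>m<M. lin_remainder g X d ftheta phi1 (fs m) n \<omega>)) 0"
    using rem by (intro conv_in_prob_zero_cmult conv_in_prob_zero_sum) auto
  then have "conv_in_prob \<Omega> \<rho> 0"
    unfolding \<rho>_def[abs_def] by (simp add: divide_inverse_commute)
  moreover have "(\<lambda>n. real n / (c n)\<^sup>2) \<longlonglongrightarrow> 0"
    unfolding c_def by real_asymp
  then have "conv_in_prob \<Omega> (\<lambda>n \<omega>. S n \<omega> / c n) 0" "conv_in_prob \<Omega> (\<lambda>n \<omega>. W n \<omega> / c n) 0"
    unfolding S_def W_def using psi_sq psi_mean Phi0_sq Phi0_mean
    by (auto intro: iid_sum_scaled_conv_in_prob_zero)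
  ultimately have numerator: "conv_in_prob \<Omega> (\<lambda>n \<omega>. \<rho> n \<omega> - S n \<omega> / c n * (W n \<omega> / c n)) 0"
    by (intro conv_in_prob_zero_diff conv_in_prob_zero_mult) measurable
  have "(\<lambda>n. real n / (real n)\<^sup>2) \<longlonglongrightarrow> 0"
    by real_asymp
  then have "conv_in_prob \<Omega> (\<lambda>n \<omega>. W n \<omega> / real n) 0"
    unfolding W_def using Phi0_sq Phi0_mean
    by (intro iid_sum_scaled_conv_in_prob_zero) auto
  then have denominator: "conv_in_prob \<Omega> (\<lambda>n \<omega>. mu0 d fbase M fs + W n \<omega> / real n) (mu0 d fbase M fs)"
    by (simp add: conv_in_prob_def)
  have expansion: "\<forall>\<^sub>F n in sequentially. \<forall>\<omega>\<in>space \<Omega>. mu0 d fbase M fs + W n \<omega> / real n \<noteq> 0 \<longrightarrow>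
      sqrt (real n) * (rhat g gbase X M fs n \<omega> - rM d ftheta fbase M fs) - S n \<omega> / sqrt (real n)
        = (\<rho> n \<omega> - S n \<omega> / c n * (W n \<omega> / c n)) / (mu0 d fbase M fs + W n \<omega> / real n)"
    using eventually_gt_at_top[of 0]
    by eventually_elim (use mu0 in \<open>simp add: rhat_expansion S_def W_def \<rho>_def c_def\<close>)
  have "conv_in_prob \<Omega> (\<lambda>n \<omega>. sqrt (real n) * (rhat g gbase X M fs n \<omega> - rM d ftheta fbase M fs)
      - S n \<omega> / sqrt (real n)) 0"
    by (rule conv_in_prob_zero_ratio[OF _ _ numerator denominator mu0 expansion]) measurable
  then show ?thesis
    by (simp add: S_def)
qed

lemma rhat_asymptotically_normal:
  assumes mu0: "mu0 d fbase M fs > 0"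
    and gbase_meas: "\<And>m. m < M \<Longrightarrow> (\<lambda>x. gbase x (fs m)) \<in> borel_measurable PX"
    and gbase_sq: "\<And>m. m < M \<Longrightarrow> integrable PX (\<lambda>x. (gbase x (fs m))\<^sup>2)"
    and repr: "\<And>m. m < M \<Longrightarrow> d fbase (fs m) = (\<integral>x. gbase x (fs m) \<partial>PX)"
    and phi1_meas: "\<And>m. m < M \<Longrightarrow> (\<lambda>x. phi1 x (fs m)) \<in> borel_measurable PX"
    and phi1_sq: "\<And>m. m < M \<Longrightarrow> integrable PX (\<lambda>x. (phi1 x (fs m))\<^sup>2)"
    and phi1_mean: "\<And>m. m < M \<Longrightarrow> (\<integral>x. phi1 x (fs m) \<partial>PX) = 0"
    and dnF_meas: "\<And>m n. m < M \<Longrightarrow> dnF g X n (fs m) \<in> borel_measurable \<Omega>"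
    and rem: "\<And>m. m < M \<Longrightarrow> conv_in_prob \<Omega> (lin_remainder g X d ftheta phi1 (fs m)) 0"
  shows "conv_in_distr \<Omega> (\<lambda>n \<omega>. sqrt (real n) * (rhat g gbase X M fs n \<omega> - rM d ftheta fbase M fs))
           (normal_law (var_of PX (psiM phi1 gbase d ftheta fbase M fs)))"
proof -
  note PX = PX.prob_space_axioms
  have "(\<lambda>x. phi0 gbase d fbase x (fs m)) \<in> borel_measurable PX"
    and "integrable PX (\<lambda>x. (phi0 gbase d fbase x (fs m))\<^sup>2)"
    and "(\<integral>x. phi0 gbase d fbase x (fs m) \<partial>PX) = 0" if "m < M" for m
    using phi0_centered[where gbase = gbase and d = d and fbase = fbase and f = "fs m", OF PX gbase_meas[OF that] gbase_sq[OF that] repr[OF that]]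
    by auto
  note Phi0 = Phi_centered[where \<phi> = "phi0 gbase d fbase" and fs = fs, OF PX this]
  note Phi1 = Phi_centered[where \<phi> = phi1 and fs = fs, OF PX phi1_meas phi1_sq phi1_mean]
  note psi = psiM_centered[OF PX Phi1 Phi0, where ftheta = ftheta]
  have "lin_remainder g X d ftheta phi1 (fs m) n \<in> borel_measurable \<Omega>" if "m < M" for m n
    using dnF_meas[OF that] phi1_meas[OF that] unfolding lin_remainder_def by measurable
  note remainder = rhat_remainder_conv_in_prob[OF mu0 psi Phi0 this rem]
  have clt: "conv_in_distr \<Omega> (\<lambda>n \<omega>. (\<Sum>i<n. psiM phi1 gbase d ftheta fbase M fs (X i \<omega>)) / sqrt (real n))
      (normal_law (var_of PX (psiM phi1 gbase d ftheta fbase M fs)))"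
    using iid_sum_conv_in_distr_normal_law[OF psi] var_of_centered[OF psi(3)] by simp
  have [measurable]: "psiM phi1 gbase d ftheta fbase M fs \<in> borel_measurable PX"
    by (rule psi(1))
  have [measurable]: "(\<lambda>\<omega>. \<Sum>m<M. dnF g X n (fs m) \<omega>) \<in> borel_measurable \<Omega>"
    and [measurable]: "(\<lambda>\<omega>. \<Sum>m<M. dn_base gbase X n (fs m) \<omega>) \<in> borel_measurable \<Omega>" for n
    using dnF_meas measurable_compose[OF measurable_X gbase_meas] unfolding dn_base_def
    by (auto intro!: borel_measurable_sum borel_measurable_divide)
  then have Y_meas: "(\<lambda>\<omega>. sqrt (real n) * (rhat g gbase X M fs n \<omega> - rM d ftheta fbase M fs))
      \<in> borel_measurable \<Omega>" for n
    unfolding rhat_def by measurable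
  show ?thesis
    by (rule conv_in_distr_slutsky[OF real_distribution_normal_law _ Y_meas clt remainder]) measurable
qed

end

lemma AE_PiM_lessThan_components:
  fixes M :: nat
  assumes "prob_space N" and "AE x in N. P x"
  shows "AE xs in PiM {..<M} (\<lambda>_. N). \<forall>m<M. P (xs m)"
proof -
  have "AE xs in PiM {..<M} (\<lambda>_. N). \<forall>m\<in>{..<M}. P (xs m)"
    by (rule eventually_ball_finite) (auto intro!: AE_PiM_component assms)
  then show ?thesis
    by (rule eventually_mono) simp
qed

theorem theorem1:
  fixes PX :: "'x measure" and lamF :: "'f measure" and \<Omega> :: "'w measure"
    and d :: "'f \<Rightarrow> 'f \<Rightarrow> real" and ftheta :: "'t \<Rightarrow> 'f" and fbase :: 'f
    and g :: "'x \<Rightarrow> 't \<Rightarrow> 'f \<Rightarrow> real" and gbase :: "'x \<Rightarrow> 'f \<Rightarrow> real"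
    and phi1 :: "'x \<Rightarrow> 'f \<Rightarrow> real" and X :: "nat \<Rightarrow> 'w \<Rightarrow> 'x" and M :: nat
  assumes PX: "prob_space PX" and lamF: "prob_space lamF" and Omega: "prob_space \<Omega>"
    and meas_g: "\<forall>\<theta> f. (\<lambda>x. g x \<theta> f) \<in> borel_measurable PX"
    and meas_gbase: "\<forall>f. (\<lambda>x. gbase x f) \<in> borel_measurable PX"
    and repr: "AE f in lamF. (\<forall>\<theta>. d (ftheta \<theta>) f = (\<integral>x. g x \<theta> f \<partial>PX))
                             \<and> d fbase f = (\<integral>x. gbase x f \<partial>PX)"
    and moments: "\<exists>\<epsilon>>0. \<exists>C. AE f in lamF.
        (\<forall>\<theta>. integrable PX (\<lambda>x. \<bar>g x \<theta> f\<bar> powr (2 + \<epsilon>))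
             \<and> (\<integral>x. \<bar>g x \<theta> f\<bar> powr (2 + \<epsilon>) \<partial>PX) \<le> C)
        \<and> integrable PX (\<lambda>x. \<bar>gbase x f\<bar> powr (2 + \<epsilon>))
        \<and> (\<integral>x. \<bar>gbase x f\<bar> powr (2 + \<epsilon>) \<partial>PX) \<le> C"
    and indep: "prob_space.indep_vars \<Omega> (\<lambda>_. PX) X UNIV"
    and ident: "\<forall>i. distr \<Omega> PX (X i) = PX"
    and meas_dnF: "AE f in lamF. \<forall>n. dnF g X n f \<in> borel_measurable \<Omega>"
    and asym_lin: "AE f in lamF.
        (\<lambda>x. phi1 x f) \<in> borel_measurable PX
        \<and> integrable PX (\<lambda>x. phi1 x f) \<and> (\<integral>x. phi1 x f \<partial>PX) = 0
        \<and> integrable PX (\<lambda>x. (phi1 x f)\<^sup>2)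
        \<and> conv_in_prob \<Omega>
            (\<lambda>n \<omega>. sqrt (real n) * (dnF g X n f \<omega> - dF d ftheta f
                                      - (\<Sum>i<n. phi1 (X i \<omega>) f) / real n)) 0"
    and M: "M \<ge> 1"
  shows "AE fs in PiM {..<M} (\<lambda>_. lamF).
           mu0 d fbase M fs > 0 \<longrightarrow>
           conv_in_distr \<Omega>
             (\<lambda>n \<omega>. sqrt (real n) * (rhat g gbase X M fs n \<omega> - rM d ftheta fbase M fs))
             (normal_law (var_of PX (psiM phi1 gbase d ftheta fbase M fs)))"
proof -
  interpret iid_sample \<Omega> PX X
    using Omega indep ident by (simp add: iid_sample_def iid_sample_axioms_def)
  obtain \<epsilon> where "\<epsilon> > 0" and gbase_moment: "AE f in lamF. integrable PX (\<lambda>x. \<bar>gbase x f\<bar> powr (2 + \<epsilon>))"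
    using moments by (auto elim!: eventually_mono)
  note AE_components = AE_PiM_lessThan_components[where M = M, OF lamF]
  from AE_components[OF repr] AE_components[OF gbase_moment]
    AE_components[OF meas_dnF] AE_components[OF asym_lin]
  show ?thesis
  proof eventually_elim
    case (elim fs)
    show ?case
    proof
      assume "mu0 d fbase M fs > 0"
      then show "conv_in_distr \<Omega>
          (\<lambda>n \<omega>. sqrt (real n) * (rhat g gbase X M fs n \<omega> - rM d ftheta fbase M fs))
          (normal_law (var_of PX (psiM phi1 gbase d ftheta fbase M fs)))"
        by (rule rhat_asymptotically_normal)
          (use elim meas_gbase \<open>\<epsilon> > 0\<close> in
            \<open>auto simp: lin_remainder_def[abs_def] intro!: PX.square_integrable_if_integrable_powr[of _ "2 + \<epsilon>"]\<close>)
    qed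
  qed
qed

end
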